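(* Let $C\in\mathbb{F}_p^n$, $C\ne0$, and $(d_1,\dots,d_n)\in\mathbb{F}_p^n$ satisfy $\sum_jM_jC_j=0$, $\Omega^M_jC=d_jC$ for $j=1,\dots,n-1$, and $d_n=0$. Then $\sum_{j=1}^nd_j=\sum_{j=1}^nM_j$ in $\mathbb{F}_p$.
   Context: $p$ is an odd prime, $n\ge2$, and $M_1,\dots,M_n$ are integers with $1\le M_i\le p-1$, viewed in $\mathbb{F}_p$. For $j\ne l$, $\Omega^M_{jl}$ is the $n\times n$ matrix over $\mathbb{F}_p$ with only nonzero entries $(\Omega^M_{jl})_{jj}=M_l$, $(\Omega^M_{jl})_{jl}=-M_l$, $(\Omega^M_{jl})_{lj}=-M_j$, $(\Omega^M_{jl})_{ll}=M_j$; $\Omega^M_j=\sum_{l=j+1}^n\Omega^M_{jl}$; $C$ is a column vector. *)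

theory Defs
  imports Main "HOL-Number_Theory.Cong"
begin

text \<open>Elements of F_p are represented by integers, equalities in F_p by congruences mod p.
Indices run over 1..n.  Entry (a,b) of the matrix Omega^M_{jl} (for j different from l).\<close>

definition OmegaM_jl :: "(nat \<Rightarrow> int) \<Rightarrow> nat \<Rightarrow> nat \<Rightarrow> nat \<Rightarrow> nat \<Rightarrow> int" where
  "OmegaM_jl M j l a b =
     (if a = j \<and> b = j then M l
      else if a = j \<and> b = l then - M l
      else if a = l \<and> b = j then - M j
      else if a = l \<and> b = l then M j
      else 0)"

definition OmegaM_j :: "(nat \<Rightarrow> int) \<Rightarrow> nat \<Rightarrow> nat \<Rightarrow> nat \<Rightarrow> nat \<Rightarrow> int" where
  "OmegaM_j M n j a b = (\<Sum>l = j+1..n. OmegaM_jl M j l a b)"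

end

theory Submission
  imports Defs
begin

text \<open>Let k be the first index with C_k nonzero. Row k of the eigenvector equation
  Omega^M_j C = d_j C reads M_j (C_k - C_j) = d_j C_k for j < k and 0 = d_j C_k for j > k,
  so d_j = M_j before k and d_j = 0 after it. Row k for j = k reads
  (sum of M_l (C_k - C_l) over l > k) = d_k C_k, and the linear relation sum M_l C_l = 0,
  whose terms below k vanish, turns the left side into (sum of M_l over l \<ge> k) C_k.\<close>

lemma OmegaM_jl_mult_sum:
  assumes "j \<noteq> l" "j \<in> {1..n}" "l \<in> {1..n}"
  shows "(\<Sum>b = 1..n. OmegaM_jl M j l a b * C b) =
    (if a = j then M l * (C j - C l) else if a = l then M j * (C l - C j) else 0)"
proof -
  let ?x = "if a = j then M l else if a = l then - M j else 0"
  let ?y = "if a = j then - M l else if a = l then M j else 0"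
  have "OmegaM_jl M j l a b * C b = (if b = j then ?x * C j else 0) + (if b = l then ?y * C l else 0)"
    for b
    using assms(1) by (auto simp: OmegaM_jl_def)
  then have "(\<Sum>b = 1..n. OmegaM_jl M j l a b * C b) = ?x * C j + ?y * C l"
    using assms(2,3) by (simp add: sum.distrib sum.delta)
  then show ?thesis
    using assms(1) by (auto simp: algebra_simps)
qed

lemma OmegaM_j_mult_sum:
  assumes "1 \<le> j" "j < n" "a \<in> {1..n}"
  shows "(\<Sum>b = 1..n. OmegaM_j M n j a b * C b) =
    (if a < j then 0
     else if a = j then (\<Sum>l = j+1..n. M l * (C j - C l))
     else M j * (C a - C j))"
proof -
  have "(\<Sum>b = 1..n. OmegaM_j M n j a b * C b) =
      (\<Sum>l = j+1..n. \<Sum>b = 1..n. OmegaM_jl M j l a b * C b)"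
    unfolding OmegaM_j_def by (simp add: sum_distrib_right) (rule sum.swap)
  also have "\<dots> = (\<Sum>l = j+1..n.
      if a = j then M l * (C j - C l) else if a = l then M j * (C l - C j) else 0)"
    using assms by (intro sum.cong refl OmegaM_jl_mult_sum) auto
  also have "\<dots> = (if a < j then 0
     else if a = j then (\<Sum>l = j+1..n. M l * (C j - C l))
     else M j * (C a - C j))"
    using assms by (auto simp: sum.delta)
  finally show ?thesis .
qed

lemma cong_mult_rcancel_prime:
  fixes p :: int
  assumes "prime p" "\<not> [c = 0] (mod p)" "[a * c = b * c] (mod p)"
  shows "[a = b] (mod p)"
proof -
  have "coprime p c"
    using assms(1,2) by (simp add: cong_0_iff prime_imp_coprime)
  then have "coprime c p"
    by (simp add: coprime_commute)
  then show ?thesis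
    using assms(3) by (simp add: cong_mult_rcancel)
qed

lemma eigenvalue_before_first_nonzero:
  fixes p :: int
  assumes "prime p" "1 \<le> j" "j < k" "k \<le> n"
    and "\<not> [C k = 0] (mod p)" "[C j = 0] (mod p)"
    and "[(\<Sum>b = 1..n. OmegaM_j M n j k b * C b) = d j * C k] (mod p)"
  shows "[d j = M j] (mod p)"
proof -
  have "k \<in> {1..n}" "j < n"
    using assms(2-4) by auto
  then have "(\<Sum>b = 1..n. OmegaM_j M n j k b * C b) = M j * (C k - C j)"
    using OmegaM_j_mult_sum[OF assms(2), of n k M C] assms(3) by simp
  then have "[M j * (C k - C j) = d j * C k] (mod p)"
    using assms(7) by simp
  moreover have "[M j * (C k - C j) = M j * C k] (mod p)"
    using assms(6) by (simp add: cong_iff_dvd_diff cong_0_iff algebra_simps)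
  ultimately have "[d j * C k = M j * C k] (mod p)"
    using cong_sym cong_trans by blast
  then show ?thesis
    using assms(1,5) by (rule cong_mult_rcancel_prime[rotated 2])
qed

lemma eigenvalue_after_first_nonzero:
  fixes p :: int
  assumes "prime p" "1 \<le> k" "k < j" "j < n" "\<not> [C k = 0] (mod p)"
    and "[(\<Sum>b = 1..n. OmegaM_j M n j k b * C b) = d j * C k] (mod p)"
  shows "[d j = 0] (mod p)"
proof -
  have "k \<in> {1..n}" "1 \<le> j"
    using assms(2-4) by auto
  then have "(\<Sum>b = 1..n. OmegaM_j M n j k b * C b) = 0"
    using OmegaM_j_mult_sum[OF _ assms(4), of k M C] assms(3) by simp
  then have "[d j * C k = 0 * C k] (mod p)"
    using assms(6) by (simp add: cong_sym)
  then show ?thesis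
    using assms(1,5) by (rule cong_mult_rcancel_prime[rotated 2])
qed

lemma eigenvalue_at_first_nonzero:
  fixes p :: int
  assumes "prime p" "1 \<le> k" "k < n" "\<not> [C k = 0] (mod p)"
    and "[(\<Sum>l = k..n. M l * C l) = 0] (mod p)"
    and "[(\<Sum>b = 1..n. OmegaM_j M n k k b * C b) = d k * C k] (mod p)"
  shows "[d k = (\<Sum>l = k..n. M l)] (mod p)"
proof -
  have "(\<Sum>b = 1..n. OmegaM_j M n k k b * C b) = (\<Sum>l = k+1..n. M l * (C k - C l))"
    using OmegaM_j_mult_sum[OF assms(2,3), of k M C] assms(2,3) by simp
  then have row: "[(\<Sum>l = k+1..n. M l * (C k - C l)) = d k * C k] (mod p)"
    using assms(6) by simp
  have "(\<Sum>l = k+1..n. M l * (C k - C l)) =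
      (\<Sum>l = k+1..n. M l) * C k - (\<Sum>l = k+1..n. M l * C l)"
    by (simp add: right_diff_distrib sum_subtractf sum_distrib_right)
  then have "(\<Sum>l = k..n. M l) * C k =
      (\<Sum>l = k+1..n. M l * (C k - C l)) + (\<Sum>l = k..n. M l * C l)"
    using assms(3) by (simp add: sum.atLeast_Suc_atMost[of k n] algebra_simps)
  also have "[\<dots> = d k * C k + 0] (mod p)"
    using row assms(5) by (rule cong_add)
  finally have "[d k * C k = (\<Sum>l = k..n. M l) * C k] (mod p)"
    by (simp add: cong_sym)
  then show ?thesis
    using assms(1,4) by (rule cong_mult_rcancel_prime[rotated 2])
qed

lemma sum_split_at:
  fixes g :: "nat \<Rightarrow> 'a::comm_monoid_add"
  assumes "1 \<le> k" "k \<le> n"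
  shows "(\<Sum>j = 1..n. g j) = (\<Sum>j = 1..<k. g j) + (\<Sum>j = k..n. g j)"
proof -
  have "{1..n} = {1..<k} \<union> {k..n}"
    using assms by auto
  then show ?thesis
    by (simp add: sum.union_disjoint ivl_disj_int)
qed

lemma cong_sum_upper_part:
  fixes f :: "nat \<Rightarrow> int"
  assumes "1 \<le> k" "k \<le> n" "[(\<Sum>j = 1..n. f j) = 0] (mod p)"
    and "\<And>i. i \<in> {1..<k} \<Longrightarrow> [f i = 0] (mod p)"
  shows "[(\<Sum>j = k..n. f j) = 0] (mod p)"
proof -
  have "[(\<Sum>j = 1..<k. f j) = 0] (mod p)"
    using cong_sum[of "{1..<k}" f "\<lambda>_. 0" p] assms(4) by simp
  then have "[(\<Sum>j = 1..<k. f j) + (\<Sum>j = k..n. f j) = 0 + (\<Sum>j = k..n. f j)] (mod p)"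
    by (rule cong_add) (rule cong_refl)
  then show ?thesis
    using assms(3) sum_split_at[OF assms(1,2), of f] by (metis add_0 cong_sym cong_trans)
qed

lemma sum_eigenvalues_before_first_nonzero:
  fixes p :: int
  assumes "prime p" "1 \<le> k" "k \<le> n" "\<not> [C k = 0] (mod p)"
    and "\<And>i. i \<in> {1..<k} \<Longrightarrow> [C i = 0] (mod p)"
    and "\<And>j. 1 \<le> j \<Longrightarrow> j < n \<Longrightarrow>
      [(\<Sum>b = 1..n. OmegaM_j M n j k b * C b) = d j * C k] (mod p)"
  shows "[(\<Sum>j = 1..<k. d j) = (\<Sum>j = 1..<k. M j)] (mod p)"
proof (rule cong_sum)
  fix j
  assume j: "j \<in> {1..<k}"
  then have "1 \<le> j" "j < k" "j < n"
    using assms(3) by auto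
  then show "[d j = M j] (mod p)"
    using eigenvalue_before_first_nonzero[of p j k n C M d] assms j by blast
qed

lemma sum_eigenvalues_after_first_nonzero:
  fixes p :: int
  assumes "prime p" "1 \<le> k" "\<not> [C k = 0] (mod p)" "[d n = 0] (mod p)"
    and "\<And>j. 1 \<le> j \<Longrightarrow> j < n \<Longrightarrow>
      [(\<Sum>b = 1..n. OmegaM_j M n j k b * C b) = d j * C k] (mod p)"
  shows "[(\<Sum>j = k+1..n. d j) = 0] (mod p)"
proof -
  have "[d j = 0] (mod p)" if "j \<in> {k+1..n}" for j
  proof (cases "j < n")
    case True
    have "1 \<le> j" "k < j"
      using that assms(2) by auto
    then show ?thesis
      using eigenvalue_after_first_nonzero[of p k j n C M d] assms(1-3,5) True by blast
  next
    case False
    with that assms(4) show ?thesis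
      by simp
  qed
  then show ?thesis
    using cong_sum[of "{k+1..n}" d "\<lambda>_. 0" p] by simp
qed

lemma sum_eigenvalues_from_first_nonzero:
  fixes p :: int
  assumes "prime p" "1 \<le> k" "k \<le> n" "\<not> [C k = 0] (mod p)" "[d n = 0] (mod p)"
    and "[(\<Sum>l = k..n. M l * C l) = 0] (mod p)"
    and "\<And>j. 1 \<le> j \<Longrightarrow> j < n \<Longrightarrow>
      [(\<Sum>b = 1..n. OmegaM_j M n j k b * C b) = d j * C k] (mod p)"
  shows "[(\<Sum>j = k..n. d j) = (\<Sum>j = k..n. M j)] (mod p)"
proof (cases "k < n")
  case True
  have "[d k = (\<Sum>l = k..n. M l)] (mod p)"
    using eigenvalue_at_first_nonzero[of p k n C M d] assms True by blast
  moreover have "[(\<Sum>j = k+1..n. d j) = 0] (mod p)"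
    using assms(1,2,4,5,7) by (rule sum_eigenvalues_after_first_nonzero)
  ultimately have "[d k + (\<Sum>j = k+1..n. d j) = (\<Sum>l = k..n. M l) + 0] (mod p)"
    by (rule cong_add)
  then show ?thesis
    using sum.atLeast_Suc_atMost[OF assms(3), of d] by simp
next
  case False
  with assms(3) have "k = n"
    by simp
  with assms(4,6) have "[M n * C n = 0 * C n] (mod p)" "\<not> [C n = 0] (mod p)"
    by simp_all
  with assms(1) have "[M n = 0] (mod p)"
    by (metis cong_mult_rcancel_prime)
  with assms(5) have "[d n = M n] (mod p)"
    by (metis cong_sym cong_trans)
  with \<open>k = n\<close> show ?thesis
    by simp
qed

theorem corollary5p4:
  fixes p :: int and n :: nat and M C d :: "nat \<Rightarrow> int"
  assumes "prime p" and "odd p" and "n \<ge> 2"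
    and "\<forall>i\<in>{1..n}. 1 \<le> M i \<and> M i \<le> p - 1"
    and "\<exists>i\<in>{1..n}. \<not> [C i = 0] (mod p)"
    and "[(\<Sum>j = 1..n. M j * C j) = 0] (mod p)"
    and "\<forall>j\<in>{1..n-1}. \<forall>a\<in>{1..n}.
           [(\<Sum>b = 1..n. OmegaM_j M n j a b * C b) = d j * C a] (mod p)"
    and "[d n = 0] (mod p)"
  shows "[(\<Sum>j = 1..n. d j) = (\<Sum>j = 1..n. M j)] (mod p)"
proof -
  obtain k where k: "1 \<le> k" "k \<le> n" "\<not> [C k = 0] (mod p)"
    and below: "\<And>i. i \<in> {1..<k} \<Longrightarrow> [C i = 0] (mod p)"
    using assms(5) exists_least_iff[of "\<lambda>i. i \<in> {1..n} \<and> \<not> [C i = 0] (mod p)"]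
    by (metis atLeastAtMost_iff atLeastLessThan_iff less_le_trans nless_le)
  have row_k: "[(\<Sum>b = 1..n. OmegaM_j M n j k b * C b) = d j * C k] (mod p)"
    if "1 \<le> j" "j < n" for j
    using assms(7) k(1,2) that by auto
  have "[(\<Sum>l = k..n. M l * C l) = 0] (mod p)"
    using k(1,2) assms(6) by (rule cong_sum_upper_part) (use below in \<open>simp add: cong_0_iff\<close>)
  then have "[(\<Sum>j = 1..<k. d j) + (\<Sum>j = k..n. d j) =
      (\<Sum>j = 1..<k. M j) + (\<Sum>j = k..n. M j)] (mod p)"
    using sum_eigenvalues_before_first_nonzero[OF assms(1) k below row_k]
      sum_eigenvalues_from_first_nonzero[OF assms(1) k assms(8) _ row_k]
    by (intro cong_add) blast+
  then show ?thesis
    using sum_split_at[OF k(1,2), of d] sum_split_at[OF k(1,2), of M] by simp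
qed

end
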